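(* Let $F,G_1,\dots,G_n$ be pairwise disjoint always solvable graphs, let $u\in V(F)$ and $v_i\in V(G_i)$ for $1\le i\le n$, and let $H$ be the graph obtained from the disjoint union $F\cup G_1\cup\cdots\cup G_n$ by adding the edges $v_iu$ for $1\le i\le n$. If $\mathcal{A}_F(u)=0$, then $H$ is always solvable. If $\mathcal{A}_F(u)=1$, then $H$ is always solvable if and only if the number of indices $i$ with $\mathcal{A}_{G_i}(v_i)=1$ is even.
   Context: For a finite simple graph $G$ with vertex set $\{v_1,\dots,v_n\}$, the closed adjacency matrix $N(G)$ is the $n\times n$ matrix over $\mathbb{Z}_2$ whose $(i,j)$ entry is $1$ iff $i=j$ or $v_i$ is adjacent to $v_j$. $G$ is always solvable if $\operatorname{Ker}(N(G))=0$. Elements of $\operatorname{Ker}(N(G))$ are null patterns. A vertex $v$ is half-activated if $\boldsymbol{\ell}(v)=1$ for some null pattern $\boldsymbol{\ell}$; otherwise it is always-activated if $\mathbf{p}(v)=1$ for every $\mathbf{p}$ with $N(G)\mathbf{p}=\mathbf{1}$ (the all-ones vector), and never-activated if $\mathbf{p}(v)=0$ for every such $\mathbf{p}$. The activation number $\mathcal{A}_G(v)$ is $1$, $0$, $-1$ for always-, never-, half-activated respectively. *)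

theory Defs
  imports Main "HOL-Library.Z2"
begin

type_synonym 'a graph = "'a set \<times> ('a \<Rightarrow> 'a \<Rightarrow> bool)"

definition verts :: "'a graph \<Rightarrow> 'a set" where "verts G = fst G"
definition adj :: "'a graph \<Rightarrow> 'a \<Rightarrow> 'a \<Rightarrow> bool" where "adj G = snd G"

definition simple_graph :: "'a graph \<Rightarrow> bool" where
  "simple_graph G \<longleftrightarrow> finite (verts G)
     \<and> (\<forall>x y. adj G x y \<longrightarrow> x \<in> verts G \<and> y \<in> verts G)
     \<and> (\<forall>x y. adj G x y \<longrightarrow> adj G y x)
     \<and> (\<forall>x. \<not> adj G x x)"

definition vec_on :: "'a graph \<Rightarrow> ('a \<Rightarrow> bit) \<Rightarrow> bool" where
  "vec_on G p \<longleftrightarrow> (\<forall>x. x \<notin> verts G \<longrightarrow> p x = 0)"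

text \<open>The product N(G) p of the closed adjacency matrix with a vector p, over Z2.\<close>
definition closed_adj_mult :: "'a graph \<Rightarrow> ('a \<Rightarrow> bit) \<Rightarrow> 'a \<Rightarrow> bit" where
  "closed_adj_mult G p v = (\<Sum>w\<in>{w\<in>verts G. w = v \<or> adj G v w}. p w)"

definition null_pattern :: "'a graph \<Rightarrow> ('a \<Rightarrow> bit) \<Rightarrow> bool" where
  "null_pattern G l \<longleftrightarrow> vec_on G l \<and> (\<forall>v\<in>verts G. closed_adj_mult G l v = 0)"

definition always_solvable :: "'a graph \<Rightarrow> bool" where
  "always_solvable G \<longleftrightarrow> (\<forall>l. null_pattern G l \<longrightarrow> l = (\<lambda>_. 0))"

definition solution :: "'a graph \<Rightarrow> ('a \<Rightarrow> bit) \<Rightarrow> bool" where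
  "solution G p \<longleftrightarrow> vec_on G p \<and> (\<forall>v\<in>verts G. closed_adj_mult G p v = 1)"

definition half_activated :: "'a graph \<Rightarrow> 'a \<Rightarrow> bool" where
  "half_activated G v \<longleftrightarrow> (\<exists>l. null_pattern G l \<and> l v = 1)"

definition always_activated :: "'a graph \<Rightarrow> 'a \<Rightarrow> bool" where
  "always_activated G v \<longleftrightarrow> \<not> half_activated G v \<and> (\<forall>p. solution G p \<longrightarrow> p v = 1)"

definition never_activated :: "'a graph \<Rightarrow> 'a \<Rightarrow> bool" where
  "never_activated G v \<longleftrightarrow> \<not> half_activated G v \<and> (\<forall>p. solution G p \<longrightarrow> p v = 0)"

definition activation :: "'a graph \<Rightarrow> 'a \<Rightarrow> int" where
  "activation G v = (if half_activated G v then -1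
                     else if always_activated G v then 1
                     else if never_activated G v then 0 else undefined)"

text \<open>The graph H: disjoint union of F and G_0..G_(n-1) plus the edges v_i u.\<close>
definition attach_graph :: "'a graph \<Rightarrow> 'a \<Rightarrow> nat \<Rightarrow> (nat \<Rightarrow> 'a graph) \<Rightarrow> (nat \<Rightarrow> 'a) \<Rightarrow> 'a graph" where
  "attach_graph F u n G v =
     (verts F \<union> (\<Union>i<n. verts (G i)),
      \<lambda>x y. adj F x y \<or> (\<exists>i<n. adj (G i) x y)
            \<or> (\<exists>i<n. (x = v i \<and> y = u) \<or> (x = u \<and> y = v i)))"

end

(* Over Z2 the closed adjacency matrix N of a simple graph is symmetric with unit diagonal, so
   x^T N x = sum of x for every x.  Taking x = N^-1 e_v and a solution p of N p = 1 gives
   x v = x^T N p = p v: for an always solvable graph, the activation number of v is the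
   diagonal entry (N^-1)_vv.
   Restricted to G_i, a null pattern l of H satisfies N l = l(u) e_(v_i), and restricted to F it
   satisfies N l = (sum_i l(v_i)) e_u.  Hence l = l(u) N^-1 e_(v_i) on G_i and
   l = l(u) (sum_i (N^-1)_(v_i v_i)) N^-1 e_u on F, so a nonzero null pattern forces l(u) = 1,
   (N_F^-1)_uu = 1 and sum_i (N_(G_i)^-1)_(v_i v_i) = 1; conversely under these two conditions
   the sum of the columns N_F^-1 e_u and N_(G_i)^-1 e_(v_i) is a nonzero null pattern of H. *)

theory Submission
  imports Defs
begin

(* Keep + and * on bit as field operations rather than rewriting them to XOR and AND. *)
declare add_bit_eq_xor [simp del] mult_bit_eq_and [simp del]

lemma bit_add_eq_0_iff: "(a::bit) + b = 0 \<longleftrightarrow> a = b"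
  by (cases a; cases b) simp_all

lemma bit_mult_self [simp]: "(a::bit) * a = a"
  by (cases a) simp_all

lemma bit_mult_eq_1_iff: "(a::bit) * b = 1 \<longleftrightarrow> a = 1 \<and> b = 1"
  by (cases a; cases b) simp_all

lemma bit_eq_of_bool: "(b::bit) = of_bool (b = 1)"
  by (cases b) simp_all

lemma bit_eq_0_iff_even: "(b::bit) = 0 \<longleftrightarrow> even b"
  by (cases b) simp_all

lemma sum_bit_eq_0_iff_even_card:
  assumes "finite A"
  shows "(\<Sum>i\<in>A. f i :: bit) = 0 \<longleftrightarrow> even (card {i\<in>A. f i = 1})"
proof -
  have "(\<Sum>i\<in>A. f i) = (\<Sum>i\<in>A. of_bool (f i = 1))"
    by (intro sum.cong refl) (rule bit_eq_of_bool)
  also have "\<dots> = of_nat (card {i\<in>A. f i = 1})"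
    using assms by (simp add: Collect_conj_eq Int_commute)
  finally show ?thesis by (simp only: bit_eq_0_iff_even even_of_nat_iff)
qed

lemma sum_sum_symmetric_bit_eq_0:
  assumes "finite A" "\<And>x y. f x y = f y x" "\<And>x. f x x = 0"
  shows "(\<Sum>x\<in>A. \<Sum>y\<in>A. f x y) = (0::bit)"
  using assms(1)
proof (induction A rule: finite_induct)
  case (insert z A)
  have "(\<Sum>x\<in>insert z A. \<Sum>y\<in>insert z A. f x y)
     = (f z z + (\<Sum>y\<in>A. f z y)) + ((\<Sum>x\<in>A. f x z) + (\<Sum>x\<in>A. \<Sum>y\<in>A. f x y))"
    using insert by (simp add: sum.distrib)
  also have "\<dots> = 0"
    using insert assms(2,3) by simp
  finally show ?case .
qed simp

lemma finite_verts: "simple_graph G \<Longrightarrow> finite (verts G)"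
  by (simp add: simple_graph_def)

lemma adj_in_verts: "simple_graph G \<Longrightarrow> adj G x y \<Longrightarrow> x \<in> verts G \<and> y \<in> verts G"
  by (simp add: simple_graph_def)

lemma adj_sym: "simple_graph G \<Longrightarrow> adj G x y \<longleftrightarrow> adj G y x"
  unfolding simple_graph_def by blast

lemma adj_irrefl: "simple_graph G \<Longrightarrow> \<not> adj G x x"
  by (simp add: simple_graph_def)

definition closed_nbhd :: "'a graph \<Rightarrow> 'a \<Rightarrow> 'a set" where
  "closed_nbhd G w = {y\<in>verts G. y = w \<or> adj G w y}"

lemma finite_closed_nbhd: "simple_graph G \<Longrightarrow> finite (closed_nbhd G w)"
  by (simp add: closed_nbhd_def finite_verts)

lemma closed_adj_mult_closed_nbhd: "closed_adj_mult G p w = sum p (closed_nbhd G w)"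
  by (simp add: closed_adj_mult_def closed_nbhd_def)

lemma closed_adj_mult_altdef:
  "simple_graph G \<Longrightarrow>
    closed_adj_mult G p w = (\<Sum>y\<in>verts G. if y = w \<or> adj G w y then p y else 0)"
  unfolding closed_adj_mult_def by (simp add: finite_verts sum.inter_filter)

lemma closed_adj_mult_add:
  "closed_adj_mult G (\<lambda>x. p x + q x) w = closed_adj_mult G p w + closed_adj_mult G q w"
  unfolding closed_adj_mult_def by (rule sum.distrib)

lemma closed_adj_mult_scale:
  "closed_adj_mult G (\<lambda>x. c * p x) w = c * closed_adj_mult G p w"
  unfolding closed_adj_mult_def by (rule sum_distrib_left [symmetric])

lemma closed_adj_mult_cong:
  "(\<And>x. x \<in> verts G \<Longrightarrow> p x = q x) \<Longrightarrow> closed_adj_mult G p w = closed_adj_mult G q w"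
  unfolding closed_adj_mult_def by (rule sum.cong) auto

lemma vec_on_closed_adj_mult: "simple_graph G \<Longrightarrow> vec_on G (closed_adj_mult G p)"
  unfolding vec_on_def closed_adj_mult_def by (auto intro!: sum.neutral dest: adj_in_verts)

lemma vec_on_restrict: "vec_on G (\<lambda>x. if x \<in> verts G then p x else 0)"
  by (simp add: vec_on_def)

lemma finite_vec_on:
  assumes "finite (verts G)"
  shows "finite (Collect (vec_on G))"
proof -
  have "Collect (vec_on G) \<subseteq> (\<lambda>S x. if x \<in> S then 1 else 0) ` Pow (verts G)"
  proof
    fix p assume "p \<in> Collect (vec_on G)"
    then have "p = (\<lambda>x. if x \<in> {x\<in>verts G. p x = 1} then 1 else 0)"
      unfolding vec_on_def by (auto intro!: ext)
    then show "p \<in> (\<lambda>S x. if x \<in> S then 1 else 0) ` Pow (verts G)" by blast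
  qed
  then show ?thesis using assms finite_subset by blast
qed

lemma always_solvable_eq_on_verts:
  assumes "always_solvable G" "\<forall>w\<in>verts G. closed_adj_mult G p w = closed_adj_mult G q w"
    and "x \<in> verts G"
  shows "p x = q x"
proof -
  let ?d = "\<lambda>x. if x \<in> verts G then p x + q x else 0"
  have "closed_adj_mult G ?d w = closed_adj_mult G p w + closed_adj_mult G q w" for w
    by (simp add: closed_adj_mult_cong [of G ?d "\<lambda>x. p x + q x"] closed_adj_mult_add)
  then have "null_pattern G ?d"
    unfolding null_pattern_def using assms(2) by (simp add: vec_on_restrict)
  then have "?d = (\<lambda>_. 0)"
    using assms(1) unfolding always_solvable_def by blast
  then have "p x + q x = 0"
    using assms(3) by (metis (mono_tags))
  then show ?thesis
    by (simp add: bit_add_eq_0_iff)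
qed

lemma always_solvable_vec_on_eq:
  assumes "always_solvable G" "vec_on G p" "vec_on G q"
    and "\<forall>w\<in>verts G. closed_adj_mult G p w = closed_adj_mult G q w"
  shows "p = q"
proof
  fix x
  show "p x = q x"
    using assms always_solvable_eq_on_verts [of G p q x] unfolding vec_on_def
    by (cases "x \<in> verts G") simp_all
qed

lemma always_solvable_surj:
  assumes "simple_graph G" "always_solvable G"
  shows "\<exists>x. vec_on G x \<and> (\<forall>w\<in>verts G. closed_adj_mult G x w = b w)"
proof -
  let ?N = "closed_adj_mult G" and ?V = "Collect (vec_on G)"
  have "inj_on ?N ?V"
    by (rule inj_onI) (simp add: always_solvable_vec_on_eq [OF assms(2)])
  then have "?N ` ?V = ?V"
    by (intro endo_inj_surj finite_vec_on finite_verts assms(1))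
      (auto simp: vec_on_closed_adj_mult assms(1))
  moreover have "(\<lambda>x. if x \<in> verts G then b x else 0) \<in> ?V"
    by (simp add: vec_on_restrict)
  ultimately have "(\<lambda>x. if x \<in> verts G then b x else 0) \<in> ?N ` ?V"
    by simp
  then obtain x where x: "x \<in> ?V" "(\<lambda>x. if x \<in> verts G then b x else 0) = ?N x"
    by (rule imageE)
  have "?N x w = b w" if "w \<in> verts G" for w
    using fun_cong [OF x(2), of w] that by simp
  then show ?thesis
    using x(1) by blast
qed

definition closed_adj_inv :: "'a graph \<Rightarrow> ('a \<Rightarrow> bit) \<Rightarrow> 'a \<Rightarrow> bit" where
  "closed_adj_inv G b = (THE x. vec_on G x \<and> (\<forall>w\<in>verts G. closed_adj_mult G x w = b w))"

lemma closed_adj_inv: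
  assumes "simple_graph G" "always_solvable G"
  shows "vec_on G (closed_adj_inv G b)
    \<and> (\<forall>w\<in>verts G. closed_adj_mult G (closed_adj_inv G b) w = b w)"
proof -
  have "\<exists>!x. vec_on G x \<and> (\<forall>w\<in>verts G. closed_adj_mult G x w = b w)"
    using always_solvable_surj [OF assms] always_solvable_vec_on_eq [OF assms(2)] by metis
  then show ?thesis
    unfolding closed_adj_inv_def by (rule theI')
qed

lemma closed_adj_form_diag:
  assumes "simple_graph G"
  shows "(\<Sum>w\<in>verts G. x w * closed_adj_mult G x w) = (\<Sum>w\<in>verts G. x w)"
proof -
  let ?V = "verts G"
  have "(\<Sum>w\<in>?V. x w * closed_adj_mult G x w)
      = (\<Sum>w\<in>?V. \<Sum>y\<in>?V. (if y = w then x w * x y else 0) + (if adj G w y then x w * x y else 0))"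
    unfolding closed_adj_mult_altdef [OF assms] sum_distrib_left
    by (intro sum.cong refl) (auto simp: adj_irrefl [OF assms])
  also have "\<dots> = (\<Sum>w\<in>?V. \<Sum>y\<in>?V. if y = w then x w * x y else 0)
      + (\<Sum>w\<in>?V. \<Sum>y\<in>?V. if adj G w y then x w * x y else 0)"
    by (simp only: sum.distrib)
  also have "(\<Sum>w\<in>?V. \<Sum>y\<in>?V. if adj G w y then x w * x y else 0) = 0"
    by (rule sum_sum_symmetric_bit_eq_0)
      (auto simp: finite_verts adj_irrefl assms adj_sym [OF assms] mult.commute)
  finally show ?thesis
    using finite_verts [OF assms] by simp
qed

lemma closed_adj_form_sym:
  assumes "simple_graph G"
  shows "(\<Sum>w\<in>verts G. x w * closed_adj_mult G p w) = (\<Sum>w\<in>verts G. p w * closed_adj_mult G x w)"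
proof -
  have "(\<Sum>w\<in>verts G. x w * closed_adj_mult G p w)
     = (\<Sum>w\<in>verts G. \<Sum>y\<in>verts G. if y = w \<or> adj G w y then x w * p y else 0)"
    unfolding closed_adj_mult_altdef [OF assms] sum_distrib_left by (intro sum.cong refl) auto
  also have "\<dots> = (\<Sum>y\<in>verts G. \<Sum>w\<in>verts G. if y = w \<or> adj G w y then x w * p y else 0)"
    by (rule sum.swap)
  also have "\<dots> = (\<Sum>w\<in>verts G. p w * closed_adj_mult G x w)"
    unfolding closed_adj_mult_altdef [OF assms] sum_distrib_left
    by (intro sum.cong refl) (auto simp: adj_sym [OF assms] mult.commute)
  finally show ?thesis .
qed

lemma inverse_column_diag_eq_solution:
  assumes "simple_graph G" "v \<in> verts G"
    and "\<forall>w\<in>verts G. closed_adj_mult G x w = of_bool (w = v)"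
    and "solution G p"
  shows "x v = p v"
proof -
  have fin: "finite (verts G)"
    using assms(1) by (rule finite_verts)
  have "x v = (\<Sum>w\<in>verts G. x w * closed_adj_mult G x w)"
    using assms(2,3) fin by simp
  also have "\<dots> = (\<Sum>w\<in>verts G. x w)"
    by (rule closed_adj_form_diag [OF assms(1)])
  also have "\<dots> = (\<Sum>w\<in>verts G. x w * closed_adj_mult G p w)"
    using assms(4) unfolding solution_def by simp
  also have "\<dots> = (\<Sum>w\<in>verts G. p w * closed_adj_mult G x w)"
    by (rule closed_adj_form_sym [OF assms(1)])
  also have "\<dots> = p v"
    using assms(2,3) fin by simp
  finally show ?thesis .
qed

lemma activation_eq_solution:
  assumes "simple_graph G" "always_solvable G" "solution G p"
  shows "activation G v = (if p v = 1 then 1 else 0)"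
proof -
  have not_half: "\<not> half_activated G v"
    using assms(2) unfolding half_activated_def always_solvable_def by auto
  have unique: "\<And>q. solution G q \<Longrightarrow> q = p"
    using always_solvable_vec_on_eq [OF assms(2)] assms(3) unfolding solution_def by metis
  have "always_activated G v \<longleftrightarrow> p v = 1"
    unfolding always_activated_def using not_half assms(3) unique by blast
  moreover have "never_activated G v \<longleftrightarrow> p v = 0"
    unfolding never_activated_def using not_half assms(3) unique by blast
  ultimately show ?thesis
    using not_half unfolding activation_def by (cases "p v") simp_all
qed

definition closed_adj_inv_col :: "'a graph \<Rightarrow> 'a \<Rightarrow> 'a \<Rightarrow> bit" where
  "closed_adj_inv_col G v = closed_adj_inv G (\<lambda>w. of_bool (w = v))"

lemma closed_adj_inv_col:
  assumes "simple_graph G" "always_solvable G"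
  shows "vec_on G (closed_adj_inv_col G v)
    \<and> (\<forall>w\<in>verts G. closed_adj_mult G (closed_adj_inv_col G v) w = of_bool (w = v))"
  unfolding closed_adj_inv_col_def by (rule closed_adj_inv [OF assms])

lemma eq_scaled_closed_adj_inv_col:
  assumes "simple_graph G" "always_solvable G"
    and "\<forall>w\<in>verts G. closed_adj_mult G x w = c * of_bool (w = v)" and "y \<in> verts G"
  shows "x y = c * closed_adj_inv_col G v y"
  using assms(3,4) closed_adj_inv_col [OF assms(1,2), of v]
  by (intro always_solvable_eq_on_verts [OF assms(2)]) (simp add: closed_adj_mult_scale)

lemma activation_eq_closed_adj_inv_col:
  assumes "simple_graph G" "always_solvable G" "v \<in> verts G"
  shows "activation G v = (if closed_adj_inv_col G v v = 1 then 1 else 0)"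
proof -
  have "solution G (closed_adj_inv G (\<lambda>_. 1))"
    using closed_adj_inv [OF assms(1,2)] unfolding solution_def by blast
  moreover have "closed_adj_inv_col G v v = closed_adj_inv G (\<lambda>_. 1) v"
    using calculation closed_adj_inv_col [OF assms(1,2)] assms(3)
    by (intro inverse_column_diag_eq_solution [OF assms(1)]) auto
  ultimately show ?thesis
    using activation_eq_solution [OF assms(1,2)] by simp
qed

lemma verts_attach_graph: "verts (attach_graph F u n G v) = verts F \<union> (\<Union>i<n. verts (G i))"
  by (simp add: attach_graph_def verts_def)

lemma adj_attach_graph:
  "adj (attach_graph F u n G v) x y \<longleftrightarrow> adj F x y \<or> (\<exists>i<n. adj (G i) x y)
     \<or> (\<exists>i<n. (x = v i \<and> y = u) \<or> (x = u \<and> y = v i))"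
  by (simp add: attach_graph_def adj_def)

locale attachment =
  fixes F :: "'a graph" and G :: "nat \<Rightarrow> 'a graph" and u :: 'a and v :: "nat \<Rightarrow> 'a" and n :: nat
  assumes simple_F: "simple_graph F" and solvable_F: "always_solvable F"
    and simple_G: "\<And>i. i < n \<Longrightarrow> simple_graph (G i)"
    and solvable_G: "\<And>i. i < n \<Longrightarrow> always_solvable (G i)"
    and disjoint_F_G: "\<And>i. i < n \<Longrightarrow> verts F \<inter> verts (G i) = {}"
    and disjoint_G_G: "\<And>i j. i < n \<Longrightarrow> j < n \<Longrightarrow> i \<noteq> j \<Longrightarrow> verts (G i) \<inter> verts (G j) = {}"
    and u_in_F: "u \<in> verts F"
    and v_in_G: "\<And>i. i < n \<Longrightarrow> v i \<in> verts (G i)"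
begin

abbreviation H :: "'a graph" where
  "H \<equiv> attach_graph F u n G v"

abbreviation colF :: "'a \<Rightarrow> bit" where
  "colF \<equiv> closed_adj_inv_col F u"

abbreviation colG :: "nat \<Rightarrow> 'a \<Rightarrow> bit" where
  "colG i \<equiv> closed_adj_inv_col (G i) (v i)"

lemma index_unique: "i < n \<Longrightarrow> j < n \<Longrightarrow> x \<in> verts (G i) \<Longrightarrow> x \<in> verts (G j) \<Longrightarrow> i = j"
  using disjoint_G_G by blast

lemma adj_G_in_verts: "i < n \<Longrightarrow> adj (G i) x y \<Longrightarrow> x \<in> verts (G i) \<and> y \<in> verts (G i)"
  by (rule adj_in_verts [OF simple_G])

lemma adj_attach_on_F:
  assumes "w \<in> verts F"
  shows "adj H w y \<longleftrightarrow> adj F w y \<or> (w = u \<and> y \<in> v ` {..<n})"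
proof -
  have "\<not> adj (G j) w y" and "w \<noteq> v j" if "j < n" for j
    using assms disjoint_F_G [OF that] adj_G_in_verts [OF that] v_in_G [OF that] by blast+
  then show ?thesis
    unfolding adj_attach_graph by blast
qed

lemma adj_attach_on_G:
  assumes "i < n" "w \<in> verts (G i)"
  shows "adj H w y \<longleftrightarrow> adj (G i) w y \<or> (w = v i \<and> y = u)"
proof -
  have "\<not> adj F w y" "w \<noteq> u"
    using assms disjoint_F_G [OF assms(1)] adj_in_verts [OF simple_F] u_in_F by blast+
  moreover have "\<not> adj (G j) w y" and "w = v j \<Longrightarrow> j = i" if "j < n" "j \<noteq> i" for j
    using assms that index_unique adj_G_in_verts v_in_G by blast+
  ultimately show ?thesis
    unfolding adj_attach_graph using assms(1) by blast
qed

lemma closed_nbhd_attach_on_F: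
  assumes "w \<in> verts F"
  shows "closed_nbhd H w = closed_nbhd F w \<union> (if w = u then v ` {..<n} else {})"
  using assms v_in_G adj_in_verts [OF simple_F]
  unfolding closed_nbhd_def adj_attach_on_F [OF assms] verts_attach_graph by auto

lemma closed_nbhd_attach_on_G:
  assumes "i < n" "w \<in> verts (G i)"
  shows "closed_nbhd H w = closed_nbhd (G i) w \<union> (if w = v i then {u} else {})"
  using assms u_in_F adj_G_in_verts [OF assms(1)]
  unfolding closed_nbhd_def adj_attach_on_G [OF assms] verts_attach_graph by auto

lemma closed_adj_mult_attach_on_F:
  assumes "w \<in> verts F"
  shows "closed_adj_mult H l w = closed_adj_mult F l w + (if w = u then (\<Sum>i<n. l (v i)) else 0)"
proof -
  have "inj_on v {..<n}"
    using v_in_G index_unique by (intro inj_onI) (metis lessThan_iff)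
  moreover have "closed_nbhd F x \<inter> v ` {..<n} = {}" for x
    using disjoint_F_G v_in_G unfolding closed_nbhd_def by blast
  ultimately show ?thesis
    unfolding closed_adj_mult_closed_nbhd closed_nbhd_attach_on_F [OF assms]
    by (simp add: sum.union_disjoint sum.reindex finite_closed_nbhd simple_F)
qed

lemma closed_adj_mult_attach_on_G:
  assumes "i < n" "w \<in> verts (G i)"
  shows "closed_adj_mult H l w = closed_adj_mult (G i) l w + (if w = v i then l u else 0)"
proof -
  have "u \<notin> closed_nbhd (G i) x" for x
    using disjoint_F_G [OF assms(1)] u_in_F unfolding closed_nbhd_def by blast
  then show ?thesis
    unfolding closed_adj_mult_closed_nbhd closed_nbhd_attach_on_G [OF assms]
    by (simp add: finite_closed_nbhd simple_G [OF assms(1)])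
qed

lemma null_pattern_attach_on_F:
  assumes "null_pattern H l" "w \<in> verts F"
  shows "closed_adj_mult F l w = (\<Sum>i<n. l (v i)) * of_bool (w = u)"
proof -
  have "closed_adj_mult H l w = 0"
    using assms unfolding null_pattern_def verts_attach_graph by blast
  then show ?thesis
    using closed_adj_mult_attach_on_F [OF assms(2), of l]
    by (cases "w = u") (simp_all add: bit_add_eq_0_iff)
qed

lemma null_pattern_attach_on_G:
  assumes "null_pattern H l" "i < n" "w \<in> verts (G i)"
  shows "closed_adj_mult (G i) l w = l u * of_bool (w = v i)"
proof -
  have "closed_adj_mult H l w = 0"
    using assms unfolding null_pattern_def verts_attach_graph by blast
  then show ?thesis
    using closed_adj_mult_attach_on_G [OF assms(2,3), of l]
    by (cases "w = v i") (simp_all add: bit_add_eq_0_iff)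
qed

lemma null_pattern_attach_nonzero:
  assumes "null_pattern H l" "l \<noteq> (\<lambda>_. 0)"
  shows "colF u = 1 \<and> (\<Sum>i<n. colG i (v i)) = 1"
proof -
  have on_G: "l y = l u * colG i y" if "i < n" "y \<in> verts (G i)" for i y
    using that null_pattern_attach_on_G [OF assms(1) that(1)]
    by (intro eq_scaled_closed_adj_inv_col simple_G solvable_G) simp_all
  have on_F: "l y = (\<Sum>i<n. l (v i)) * colF y" if "y \<in> verts F" for y
    using that null_pattern_attach_on_F [OF assms(1)]
    by (intro eq_scaled_closed_adj_inv_col simple_F solvable_F) simp_all
  have sum: "(\<Sum>i<n. l (v i)) = l u * (\<Sum>i<n. colG i (v i))"
    using on_G v_in_G by (simp add: sum_distrib_left)
  have "l u = 1"
  proof (rule ccontr)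
    assume "l u \<noteq> 1"
    then have "l u = 0" by simp
    have "l y = 0" for y
    proof (cases "y \<in> verts H")
      case True
      then show ?thesis
        unfolding verts_attach_graph using on_F on_G sum \<open>l u = 0\<close> by auto
    next
      case False
      then show ?thesis
        using assms(1) unfolding null_pattern_def vec_on_def by blast
    qed
    then show False
      using assms(2) by blast
  qed
  then have "1 = (\<Sum>i<n. colG i (v i)) * colF u"
    using on_F [OF u_in_F] unfolding sum by simp
  then show ?thesis
    by (simp add: bit_mult_eq_1_iff)
qed

lemma not_always_solvable_attach:
  assumes "colF u = 1" "(\<Sum>i<n. colG i (v i)) = 1"
  shows "\<not> always_solvable H"
proof -
  have colF: "vec_on F colF \<and> (\<forall>w\<in>verts F. closed_adj_mult F colF w = of_bool (w = u))"
    by (rule closed_adj_inv_col [OF simple_F solvable_F])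
  have colG: "vec_on (G i) (colG i)
      \<and> (\<forall>w\<in>verts (G i). closed_adj_mult (G i) (colG i) w = of_bool (w = v i))" if "i < n" for i
    by (rule closed_adj_inv_col [OF simple_G solvable_G]) (rule that)+
  define l where "l x = colF x + (\<Sum>j<n. colG j x)" for x
  have on_F: "l x = colF x" if "x \<in> verts F" for x
  proof -
    have "colG j x = 0" if "j < n" for j
      using colG [OF that] disjoint_F_G [OF that] \<open>x \<in> verts F\<close> unfolding vec_on_def by blast
    then show ?thesis
      unfolding l_def by simp
  qed
  have on_G: "l x = colG i x" if "i < n" "x \<in> verts (G i)" for i x
  proof -
    have "colF x = 0"
      using colF disjoint_F_G [OF that(1)] that(2) unfolding vec_on_def by blast
    moreover have "colG j x = 0" if "j < n" "j \<noteq> i" for j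
      using colG [OF that(1)] index_unique [OF that(1) \<open>i < n\<close>] \<open>x \<in> verts (G i)\<close> that(2)
      unfolding vec_on_def by blast
    ultimately show ?thesis
      unfolding l_def using that(1) by (simp add: sum.remove [of _ i])
  qed
  have "null_pattern H l"
    unfolding null_pattern_def
  proof (intro conjI ballI)
    show "vec_on H l"
      using colF colG unfolding vec_on_def l_def verts_attach_graph by auto
  next
    fix w assume "w \<in> verts H"
    then consider "w \<in> verts F" | i where "i < n" "w \<in> verts (G i)"
      unfolding verts_attach_graph by blast
    then show "closed_adj_mult H l w = 0"
    proof cases
      case 1
      then show ?thesis
        using colF assms(2) on_G v_in_G
        by (simp add: closed_adj_mult_attach_on_F closed_adj_mult_cong [of F l colF] on_F)
    next
      case 2
      then show ?thesis
        using colG [OF 2(1)] assms(1) on_F [OF u_in_F]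
        by (simp add: closed_adj_mult_attach_on_G closed_adj_mult_cong [of "G i" l "colG i"] on_G)
    qed
  qed
  moreover have "l \<noteq> (\<lambda>_. 0)"
    using on_F [OF u_in_F] assms(1) by auto
  ultimately show ?thesis
    unfolding always_solvable_def by blast
qed

theorem always_solvable_attach_iff:
  "always_solvable H \<longleftrightarrow> \<not> (colF u = 1 \<and> (\<Sum>i<n. colG i (v i)) = 1)"
  using null_pattern_attach_nonzero not_always_solvable_attach unfolding always_solvable_def by blast

end

theorem corollary3p4:
  fixes F :: "'a graph" and G :: "nat \<Rightarrow> 'a graph" and u :: 'a and v :: "nat \<Rightarrow> 'a" and n :: nat
  assumes "simple_graph F" and "always_solvable F"
    and "\<And>i. i < n \<Longrightarrow> simple_graph (G i)"
    and "\<And>i. i < n \<Longrightarrow> always_solvable (G i)"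
    and "\<And>i. i < n \<Longrightarrow> verts F \<inter> verts (G i) = {}"
    and "\<And>i j. i < n \<Longrightarrow> j < n \<Longrightarrow> i \<noteq> j \<Longrightarrow> verts (G i) \<inter> verts (G j) = {}"
    and "u \<in> verts F"
    and "\<And>i. i < n \<Longrightarrow> v i \<in> verts (G i)"
  shows "(activation F u = 0 \<longrightarrow> always_solvable (attach_graph F u n G v))
       \<and> (activation F u = 1 \<longrightarrow>
            (always_solvable (attach_graph F u n G v)
             \<longleftrightarrow> even (card {i. i < n \<and> activation (G i) (v i) = 1})))"
proof -
  interpret attachment F G u v n
    using assms by unfold_locales
  have activation_F: "activation F u = (if colF u = 1 then 1 else 0)"
    by (rule activation_eq_closed_adj_inv_col [OF simple_F solvable_F u_in_F])
  have "{i. i < n \<and> activation (G i) (v i) = 1} = {i\<in>{..<n}. colG i (v i) = 1}"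
    using activation_eq_closed_adj_inv_col [OF simple_G solvable_G v_in_G] by (auto split: if_splits)
  then have "even (card {i. i < n \<and> activation (G i) (v i) = 1}) \<longleftrightarrow> (\<Sum>i<n. colG i (v i)) = 0"
    by (simp add: sum_bit_eq_0_iff_even_card)
  then show ?thesis
    using always_solvable_attach_iff activation_F by auto
qed

end
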